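(* Let $K\ge 2$ and let $r\in[0,1]^K$ satisfy $r(1)>r(2)>\cdots>r(K)$. Fix a sub-optimal arm $j\in\{2,\ldots,K\}$. For a policy $\pi=\pi_\theta$ write $\varepsilon:=1-\pi(j)$ and $p_a:=\pi(a)$. There exists $\varepsilon_0>0$, depending on the reward gaps and $K$, such that for all $\varepsilon\in(0,\varepsilon_0)$: if $p_1\ge \varepsilon/K$, then under the enlightened gradient (EG) flow \[ \dot\theta(1)-\dot\theta(j)\;\ge\;\frac{\Delta_{1j}}{4K}\,\varepsilon . \]
   Context: $K$-armed bandit: the policy is parameterized by logits $\theta\in\mathbb{R}^K$ via the softmax $\pi_\theta(a)=e^{\theta(a)}/\sum_{a'}e^{\theta(a')}$. The advantage is $U(a):=r(a)-\pi_\theta^\top r$, and $\Delta_{ab}:=r(a)-r(b)$. A gated policy-gradient flow with weights $w(a)\ge 0$ is $\dot\theta(a)=\sum_{a'=1}^K w(a')\,\pi(a')\,U(a')\,(\mathbf{1}\{a=a'\}-\pi(a))$. The enlightened gradient (EG) flow is the case $w(a)=\mathbf{1}\{U(a)>0\}$. *)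

theory Defs
  imports Complex_Main
begin

text \<open>Arms are indexed by 1..K; logits are a function nat => real (only values on 1..K matter).\<close>

definition softmax :: "nat \<Rightarrow> (nat \<Rightarrow> real) \<Rightarrow> nat \<Rightarrow> real" where
  "softmax K \<theta> a = exp (\<theta> a) / (\<Sum>a'\<in>{1..K}. exp (\<theta> a'))"

definition advantage :: "nat \<Rightarrow> (nat \<Rightarrow> real) \<Rightarrow> (nat \<Rightarrow> real) \<Rightarrow> nat \<Rightarrow> real" where
  "advantage K r \<theta> a = r a - (\<Sum>a'\<in>{1..K}. softmax K \<theta> a' * r a')"

definition gap :: "(nat \<Rightarrow> real) \<Rightarrow> nat \<Rightarrow> nat \<Rightarrow> real" where
  "gap r a b = r a - r b"

text \<open>Gated policy-gradient flow with weights w: the time derivative of theta(a).\<close>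
definition gated_pg_flow ::
  "nat \<Rightarrow> (nat \<Rightarrow> real) \<Rightarrow> (nat \<Rightarrow> real) \<Rightarrow> (nat \<Rightarrow> real) \<Rightarrow> nat \<Rightarrow> real" where
  "gated_pg_flow K w r \<theta> a =
     (\<Sum>a'\<in>{1..K}. w a' * softmax K \<theta> a' * advantage K r \<theta> a'
        * ((if a = a' then 1 else 0) - softmax K \<theta> a))"

definition eg_flow :: "nat \<Rightarrow> (nat \<Rightarrow> real) \<Rightarrow> (nat \<Rightarrow> real) \<Rightarrow> nat \<Rightarrow> real" where
  "eg_flow K r \<theta> a =
     gated_pg_flow K (\<lambda>a'. if advantage K r \<theta> a' > 0 then 1 else 0) r \<theta> a"

end

theory Submission
  imports Defs
begin

(* Under the EG gating the flow of arm a is p(a) (U(a)^+ - S) with S = \<Sum>_a' p(a') U(a')^+,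
   so \<theta>(1) - \<theta>(j) moves at rate p(1) U(1) - p(j) U(j)^+ + (p(j) - p(1)) S.  Since S
   contains the first two terms and p(j) \<ge> p(1), this is at least p(1) U(1) - 2 \<epsilon>^2, because
   U(j)^+ \<le> \<epsilon> and 1 - p(j) + p(1) \<le> 2 \<epsilon>.  Finally U(1) = U(j) + \<Delta>_1j \<ge> \<Delta>_1j - \<epsilon> and
   p(1) \<ge> \<epsilon>/K, so for \<epsilon> small compared with \<Delta>_1j/K the term p(1) U(1) dominates. *)

lemma softmax_pos: "K \<ge> 1 \<Longrightarrow> softmax K \<theta> a > 0"
  unfolding softmax_def by (intro divide_pos_pos) (auto intro!: sum_pos)

lemma sum_softmax: "K \<ge> 1 \<Longrightarrow> (\<Sum>a\<in>{1..K}. softmax K \<theta> a) = 1"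
proof -
  assume "K \<ge> 1"
  then have "(\<Sum>a\<in>{1..K}. exp (\<theta> a)) > 0" by (intro sum_pos) auto
  then show ?thesis unfolding softmax_def by (simp add: sum_divide_distrib[symmetric])
qed

lemma softmax_add_le_1:
  assumes "K \<ge> 1" "a \<in> {1..K}" "b \<in> {1..K}" "a \<noteq> b"
  shows "softmax K \<theta> a + softmax K \<theta> b \<le> 1"
proof -
  have "(\<Sum>c\<in>{a,b}. softmax K \<theta> c) \<le> (\<Sum>c\<in>{1..K}. softmax K \<theta> c)"
    using assms softmax_pos[of K] by (intro sum_mono2) (auto intro: less_imp_le)
  then show ?thesis using assms sum_softmax by simp
qed

lemma advantage_diff: "advantage K r \<theta> a - advantage K r \<theta> b = gap r a b"
  unfolding advantage_def gap_def by simp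

lemma advantage_eq_sum:
  assumes "K \<ge> 1"
  shows "advantage K r \<theta> a = (\<Sum>a'\<in>{1..K}. softmax K \<theta> a' * (r a - r a'))"
proof -
  have "(\<Sum>a'\<in>{1..K}. softmax K \<theta> a' * (r a - r a'))
      = r a * (\<Sum>a'\<in>{1..K}. softmax K \<theta> a') - (\<Sum>a'\<in>{1..K}. softmax K \<theta> a' * r a')"
    by (simp add: right_diff_distrib sum_subtractf sum_distrib_left mult.commute)
  then show ?thesis unfolding advantage_def using sum_softmax[OF assms] by simp
qed

lemma abs_advantage_le:
  assumes "K \<ge> 1" "\<forall>a\<in>{1..K}. 0 \<le> r a \<and> r a \<le> 1" "j \<in> {1..K}"
  shows "\<bar>advantage K r \<theta> j\<bar> \<le> 1 - softmax K \<theta> j"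
proof -
  let ?p = "softmax K \<theta>"
  have "\<bar>advantage K r \<theta> j\<bar> \<le> (\<Sum>a\<in>{1..K}. \<bar>?p a * (r j - r a)\<bar>)"
    unfolding advantage_eq_sum[OF assms(1)] by (rule sum_abs)
  also have "\<dots> \<le> (\<Sum>a\<in>{1..K}. ?p a - (if a = j then ?p a else 0))"
  proof (intro sum_mono)
    fix a assume "a \<in> {1..K}"
    then have "0 \<le> r a" "r a \<le> 1" "0 \<le> r j" "r j \<le> 1" using assms(2,3) by auto
    then have "\<bar>r j - r a\<bar> \<le> (if a = j then 0 else 1)" by auto
    then show "\<bar>?p a * (r j - r a)\<bar> \<le> ?p a - (if a = j then ?p a else 0)"
      using softmax_pos[OF assms(1), of \<theta> a] by (simp add: abs_mult mult_left_le split: if_splits)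
  qed
  also have "\<dots> = 1 - ?p j"
    using assms sum_softmax[OF assms(1)] by (simp add: sum_subtractf)
  finally show ?thesis .
qed

lemma gated_pg_flow_eq:
  assumes "a \<in> {1..K}"
  shows "gated_pg_flow K w r \<theta> a = softmax K \<theta> a *
     (w a * advantage K r \<theta> a - (\<Sum>a'\<in>{1..K}. w a' * softmax K \<theta> a' * advantage K r \<theta> a'))"
proof -
  let ?f = "\<lambda>a'. w a' * softmax K \<theta> a' * advantage K r \<theta> a'"
  have "gated_pg_flow K w r \<theta> a
      = (\<Sum>a'\<in>{1..K}. ?f a' * (if a = a' then 1 else 0)) - (\<Sum>a'\<in>{1..K}. ?f a') * softmax K \<theta> a"
    unfolding gated_pg_flow_def by (simp add: right_diff_distrib sum_subtractf sum_distrib_right)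
  also have "(\<Sum>a'\<in>{1..K}. ?f a' * (if a = a' then 1 else 0)) = ?f a"
    using assms by (simp add: if_distrib cong: if_cong)
  finally show ?thesis by (simp add: algebra_simps)
qed

lemma eg_flow_eq:
  assumes "a \<in> {1..K}"
  shows "eg_flow K r \<theta> a = softmax K \<theta> a *
     (max 0 (advantage K r \<theta> a) - (\<Sum>a'\<in>{1..K}. softmax K \<theta> a' * max 0 (advantage K r \<theta> a')))"
proof -
  have gate: "(if x > 0 then 1 else 0) * x = max 0 x" for x :: real
    by simp
  show ?thesis
    unfolding eg_flow_def gated_pg_flow_eq[OF assms] gate mult.commute[of _ "softmax K \<theta> _"]
    by (simp add: mult.assoc gate)
qed

lemma eg_flow_diff_ge:
  assumes K: "K \<ge> 1" and ab: "a \<in> {1..K}" "b \<in> {1..K}" "a \<noteq> b"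
    and Ua: "advantage K r \<theta> a > 0"
    and Ub: "\<bar>advantage K r \<theta> b\<bar> \<le> 1 - softmax K \<theta> b"
    and pab: "softmax K \<theta> a \<le> softmax K \<theta> b"
  shows "eg_flow K r \<theta> a - eg_flow K r \<theta> b
           \<ge> softmax K \<theta> a * advantage K r \<theta> a - 2 * (1 - softmax K \<theta> b)\<^sup>2"
proof -
  define p where "p = softmax K \<theta>"
  define V where "V = (\<lambda>c. max 0 (advantage K r \<theta> c))"
  define S where "S = (\<Sum>c\<in>{1..K}. p c * V c)"
  define \<epsilon> where "\<epsilon> = 1 - p b"
  have p_pos: "\<And>c. p c > 0" unfolding p_def using softmax_pos[OF K] .
  have V_nonneg: "\<And>c. V c \<ge> 0" unfolding V_def by simp
  have Va: "V a = advantage K r \<theta> a" unfolding V_def using Ua by simp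
  have Vb: "V b \<le> \<epsilon>" unfolding V_def \<epsilon>_def p_def using Ub by (auto simp: abs_le_iff)
  have pa: "p a \<le> \<epsilon>" unfolding \<epsilon>_def p_def using softmax_add_le_1[OF K ab, of \<theta>] by simp
  have pb: "p b \<le> 1" "p a \<le> p b" using p_pos[of a] pa pab unfolding \<epsilon>_def p_def by linarith+
  have S_ge: "S \<ge> p a * V a + p b * V b"
  proof -
    have "(\<Sum>c\<in>{a,b}. p c * V c) \<le> S"
      unfolding S_def using ab p_pos V_nonneg
      by (intro sum_mono2) (auto intro: mult_nonneg_nonneg less_imp_le)
    then show ?thesis using ab by simp
  qed
  have flow_diff: "eg_flow K r \<theta> a - eg_flow K r \<theta> b = p a * V a - p b * V b + (p b - p a) * S"
    unfolding eg_flow_eq[OF ab(1)] eg_flow_eq[OF ab(2)] p_def V_def S_def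
    by (simp add: algebra_simps)
  have "(p b - p a) * S \<ge> (p b - p a) * (p a * V a + p b * V b)"
    using S_ge pb by (intro mult_left_mono) auto
  moreover have "p a * V a - p b * V b + (p b - p a) * (p a * V a + p b * V b)
      = p a * V a * (1 + p b - p a) - (p b * V b) * (\<epsilon> + p a)"
    unfolding \<epsilon>_def by (simp add: algebra_simps)
  moreover have "p a * V a * (1 + p b - p a) \<ge> p a * V a"
  proof -
    have "0 \<le> p a * V a * (p b - p a)"
      using p_pos[of a] V_nonneg[of a] pb by (intro mult_nonneg_nonneg) auto
    moreover have "p a * V a * (1 + p b - p a) = p a * V a + p a * V a * (p b - p a)"
      by (simp add: algebra_simps)
    ultimately show ?thesis by linarith
  qed
  moreover have "(p b * V b) * (\<epsilon> + p a) \<le> 2 * \<epsilon>\<^sup>2"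
  proof -
    have "(p b * V b) * (\<epsilon> + p a) \<le> (1 * \<epsilon>) * (2 * \<epsilon>)"
      using pb pa Vb p_pos[of a] p_pos[of b] V_nonneg[of b] by (intro mult_mono) auto
    then show ?thesis by (simp add: power2_eq_square)
  qed
  ultimately have "eg_flow K r \<theta> a - eg_flow K r \<theta> b \<ge> p a * V a - 2 * \<epsilon>\<^sup>2"
    unfolding flow_diff by linarith
  then show ?thesis by (simp only: Va p_def \<epsilon>_def)
qed

lemma eg_flow_diff_ge_gap:
  assumes K: "K \<ge> 1"
    and r: "\<forall>a\<in>{1..K}. 0 \<le> r a \<and> r a \<le> 1"
    and ij: "i \<in> {1..K}" "j \<in> {1..K}" "i \<noteq> j"
    and \<epsilon>: "\<epsilon> = 1 - softmax K \<theta> j" "0 < \<epsilon>" "\<epsilon> \<le> 1/2"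
      "\<epsilon> * (1 + 2 * real K) \<le> 3/4 * gap r i j"
    and pi: "softmax K \<theta> i \<ge> \<epsilon> / K"
  shows "eg_flow K r \<theta> i - eg_flow K r \<theta> j \<ge> gap r i j / (4 * real K) * \<epsilon>"
proof -
  define \<Delta> where "\<Delta> = gap r i j"
  have Uj: "\<bar>advantage K r \<theta> j\<bar> \<le> \<epsilon>" using abs_advantage_le[OF K r ij(2)] \<epsilon>(1) by simp
  have Ui: "advantage K r \<theta> i \<ge> \<Delta> - \<epsilon>"
    using Uj advantage_diff[of K r \<theta> i j] unfolding \<Delta>_def by linarith
  have small: "\<epsilon> + 2 * real K * \<epsilon> \<le> 3/4 * \<Delta>"
    using \<epsilon>(4) unfolding \<Delta>_def by (simp add: algebra_simps)
  have "\<epsilon> \<le> 2 * real K * \<epsilon>" using K \<epsilon>(2) by simp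
  then have "\<epsilon> < \<Delta>" using small \<epsilon>(2) by linarith
  then have Ui_pos: "advantage K r \<theta> i > 0" using Ui by linarith
  have "softmax K \<theta> i \<le> softmax K \<theta> j" using softmax_add_le_1[OF K ij, of \<theta>] \<epsilon> by linarith
  then have "eg_flow K r \<theta> i - eg_flow K r \<theta> j \<ge> softmax K \<theta> i * advantage K r \<theta> i - 2 * \<epsilon>\<^sup>2"
    using eg_flow_diff_ge[OF K ij Ui_pos] Uj \<epsilon>(1) by simp
  moreover have "softmax K \<theta> i * advantage K r \<theta> i \<ge> \<epsilon> / K * (\<Delta> - \<epsilon>)"
    using pi Ui \<open>\<epsilon> < \<Delta>\<close> softmax_pos[OF K, of \<theta> i] by (intro mult_mono) auto
  moreover have "\<epsilon> / K * (\<Delta> - \<epsilon>) - 2 * \<epsilon>\<^sup>2 - \<Delta> / (4 * real K) * \<epsilon>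
      = \<epsilon> / K * (3/4 * \<Delta> - \<epsilon> - 2 * real K * \<epsilon>)"
    using K by (simp add: field_simps power2_eq_square)
  moreover have "\<epsilon> / K * (3/4 * \<Delta> - \<epsilon> - 2 * real K * \<epsilon>) \<ge> 0"
    using small \<epsilon>(2) by simp
  ultimately show ?thesis unfolding \<Delta>_def by linarith
qed

theorem theorem1:
  fixes K :: nat and r :: "nat \<Rightarrow> real" and j :: nat
  assumes "K \<ge> 2"
    and "\<forall>a\<in>{1..K}. 0 \<le> r a \<and> r a \<le> 1"
    and "\<forall>a b. 1 \<le> a \<and> a < b \<and> b \<le> K \<longrightarrow> r a > r b"
    and "j \<in> {2..K}"
  shows "\<exists>\<epsilon>0 > 0. \<forall>\<theta> :: nat \<Rightarrow> real.
           let \<epsilon> = 1 - softmax K \<theta> j in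
           (0 < \<epsilon> \<and> \<epsilon> < \<epsilon>0 \<and> softmax K \<theta> 1 \<ge> \<epsilon> / real K) \<longrightarrow>
             eg_flow K r \<theta> 1 - eg_flow K r \<theta> j \<ge> gap r 1 j / (4 * real K) * \<epsilon>"
proof -
  have j: "j \<in> {1..K}" "1 \<in> {1..K}" "1 \<noteq> j" using assms(1,4) by auto
  have "gap r 1 j > 0" using assms(3) j unfolding gap_def by auto
  define \<epsilon>0 where "\<epsilon>0 = min (1/2) (3/4 * gap r 1 j / (1 + 2 * real K))"
  have "\<epsilon>0 > 0" using \<open>gap r 1 j > 0\<close> unfolding \<epsilon>0_def by simp
  moreover have "eg_flow K r \<theta> 1 - eg_flow K r \<theta> j \<ge> gap r 1 j / (4 * real K) * \<epsilon>"
    if "\<epsilon> = 1 - softmax K \<theta> j" "0 < \<epsilon>" "\<epsilon> < \<epsilon>0" "softmax K \<theta> 1 \<ge> \<epsilon> / K" for \<theta> \<epsilon>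
  proof (rule eg_flow_diff_ge_gap[OF _ assms(2) j(2,1,3) that(1,2) _ _ that(4)])
    show "\<epsilon> * (1 + 2 * real K) \<le> 3/4 * gap r 1 j"
      using that(3) unfolding \<epsilon>0_def by (simp add: field_simps)
  qed (use assms(1) that(3) in \<open>auto simp: \<epsilon>0_def\<close>)
  ultimately show ?thesis unfolding Let_def by blast
qed

end
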